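(* Let $(\mathcal{E},U,P)$ be a BCL triple with associated BCL pair $(V_1,V_2)$ on $H^2_{\mathcal{E}}(\mathbb{D})$, and let $\mathcal{S}$ be a closed subspace of $H^2_{\mathcal{E}}(\mathbb{D})$. Then $\mathcal{S}$ is reducing for both $V_1$ and $V_2$ if and only if there exists a closed subspace $\tilde{\mathcal{E}}\subseteq\mathcal{E}$ which is reducing for both $U$ and $P$ such that $\mathcal{S}=H^2_{\tilde{\mathcal{E}}}(\mathbb{D})$ (the $\tilde{\mathcal E}$-valued Hardy space, viewed as a subspace of $H^2_{\mathcal{E}}(\mathbb{D})$).
   Context: All Hilbert spaces are complex and separable; "projection" means orthogonal projection and $P^\perp=I-P$. $H^2(\mathbb{D})$ is the Hardy space of the open unit disc, $M_z$ is multiplication by $z$, and for a Hilbert space $\mathcal{E}$, $H^2_{\mathcal{E}}(\mathbb{D})$ is the $\mathcal{E}$-valued Hardy space, identified with $H^2(\mathbb{D})\otimes\mathcal{E}$ via $z^m\eta\mapsto z^m\otimes\eta$. A BCL triple is a triple $(\mathcal{E},U,P)$ where $\mathcal{E}$ is a Hilbert space, $U$ is a unitary on $\mathcal{E}$ and $P$ is a projection on $\mathcal{E}$. The BCL pair associated with it is the pair of commuting isometries on $H^2(\mathbb{D})\otimes\mathcal{E}$ $V_1=(I_{H^2}\otimes P+M_z\otimes P^\perp)(I_{H^2}\otimes U^* )$, $V_2=(I_{H^2}\otimes U)(M_z\otimes P+I_{H^2}\otimes P^\perp)$ (so $V_1V_2=V_2V_1=M_z\otimes I_{\mathcal{E}}$).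 *)

theory Defs
  imports Complex_Main
begin

class complex_hilbert = ab_group_add +
  fixes scaleC :: "complex \<Rightarrow> 'a \<Rightarrow> 'a" (infixr "*\<^sub>C" 75)
    and cinner :: "'a \<Rightarrow> 'a \<Rightarrow> complex"
  assumes scaleC_add_right: "a *\<^sub>C (x + y) = a *\<^sub>C x + a *\<^sub>C y"
    and scaleC_add_left: "(a + b) *\<^sub>C x = a *\<^sub>C x + b *\<^sub>C x"
    and scaleC_scaleC: "a *\<^sub>C (b *\<^sub>C x) = (a * b) *\<^sub>C x"
    and scaleC_one: "1 *\<^sub>C x = x"
    and cinner_add_left: "cinner (x + y) z = cinner x z + cinner y z"
    and cinner_scaleC_left: "cinner (a *\<^sub>C x) y = a * cinner x y"
    and cinner_commute: "cinner y x = cnj (cinner x y)"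
    and cinner_nonneg: "0 \<le> Re (cinner x x)"
    and cinner_eq_zero: "cinner x x = 0 \<Longrightarrow> x = 0"
    and cinner_complete:
      "(\<forall>e>0. \<exists>N. \<forall>m\<ge>N. \<forall>n\<ge>N. sqrt (Re (cinner (X m - X n) (X m - X n))) < e)
        \<Longrightarrow> \<exists>L. (\<lambda>n. sqrt (Re (cinner (X n - L) (X n - L)))) \<longlonglongrightarrow> 0"

definition cnorm :: "'a::complex_hilbert \<Rightarrow> real" where
  "cnorm x = sqrt (Re (cinner x x))"

definition separable_space :: "'a::complex_hilbert itself \<Rightarrow> bool" where
  "separable_space _ \<longleftrightarrow> (\<exists>d::nat \<Rightarrow> 'a. \<forall>x e. e > 0 \<longrightarrow> (\<exists>k. cnorm (x - d k) < e))"

definition clinear :: "('a::complex_hilbert \<Rightarrow> 'b::complex_hilbert) \<Rightarrow> bool" where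
  "clinear T \<longleftrightarrow> (\<forall>x y. T (x + y) = T x + T y) \<and> (\<forall>a x. T (a *\<^sub>C x) = a *\<^sub>C T x)"

definition unitary :: "('a::complex_hilbert \<Rightarrow> 'a) \<Rightarrow> bool" where
  "unitary U \<longleftrightarrow> clinear U \<and> surj U \<and> (\<forall>x y. cinner (U x) (U y) = cinner x y)"

definition projection :: "('a::complex_hilbert \<Rightarrow> 'a) \<Rightarrow> bool" where
  "projection P \<longleftrightarrow> clinear P \<and> (\<forall>x. P (P x) = P x) \<and> (\<forall>x y. cinner (P x) y = cinner x (P y))"

definition closed_subspace :: "'a::complex_hilbert set \<Rightarrow> bool" where
  "closed_subspace M \<longleftrightarrow> 0 \<in> M \<and> (\<forall>x\<in>M. \<forall>y\<in>M. x + y \<in> M) \<and> (\<forall>a. \<forall>x\<in>M. a *\<^sub>C x \<in> M)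
     \<and> (\<forall>X L. (\<forall>n. X n \<in> M) \<and> (\<lambda>n. cnorm (X n - L)) \<longlonglongrightarrow> 0 \<longrightarrow> L \<in> M)"

definition orth :: "'a::complex_hilbert set \<Rightarrow> 'a set" where
  "orth M = {x. \<forall>y\<in>M. cinner x y = 0}"

definition reducing :: "'a::complex_hilbert set \<Rightarrow> ('a \<Rightarrow> 'a) \<Rightarrow> bool" where
  "reducing M T \<longleftrightarrow> T ` M \<subseteq> M \<and> T ` orth M \<subseteq> orth M"

text \<open>An element of \<open>H\<^sup>2_\<E>(\<D>)\<close> is identified with its sequence of Taylor coefficients
  \<open>f(z) = \<Sum> z\<^sup>n f n\<close>, i.e. \<open>H\<^sup>2_\<E> = {f :: nat \<Rightarrow> \<E>. \<Sum> \<parallel>f n\<parallel>\<^sup>2 < \<infinity>}\<close>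
  with inner product \<open>\<Sum> \<langle>f n, g n\<rangle>\<close>; the tensor \<open>z\<^sup>m \<otimes> \<eta>\<close> is the sequence with \<open>\<eta>\<close> in slot m.\<close>

definition H2 :: "(nat \<Rightarrow> 'e::complex_hilbert) set" where
  "H2 = {f. summable (\<lambda>n. (cnorm (f n))\<^sup>2)}"

definition h2_inner :: "(nat \<Rightarrow> 'e::complex_hilbert) \<Rightarrow> (nat \<Rightarrow> 'e) \<Rightarrow> complex" where
  "h2_inner f g = (\<Sum>n. cinner (f n) (g n))"

definition h2_norm :: "(nat \<Rightarrow> 'e::complex_hilbert) \<Rightarrow> real" where
  "h2_norm f = sqrt (\<Sum>n. (cnorm (f n))\<^sup>2)"

definition H2_sub :: "'e::complex_hilbert set \<Rightarrow> (nat \<Rightarrow> 'e) set" where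
  "H2_sub E' = {f \<in> H2. \<forall>n. f n \<in> E'}"

definition h2_closed_subspace :: "(nat \<Rightarrow> 'e::complex_hilbert) set \<Rightarrow> bool" where
  "h2_closed_subspace S \<longleftrightarrow> S \<subseteq> H2 \<and> (\<lambda>n. 0) \<in> S \<and> (\<forall>f\<in>S. \<forall>g\<in>S. (\<lambda>n. f n + g n) \<in> S)
     \<and> (\<forall>a. \<forall>f\<in>S. (\<lambda>n. a *\<^sub>C f n) \<in> S)
     \<and> (\<forall>X L. (\<forall>k. X k \<in> S) \<and> L \<in> H2 \<and> (\<lambda>k. h2_norm (\<lambda>n. X k n - L n)) \<longlonglongrightarrow> 0 \<longrightarrow> L \<in> S)"

definition h2_orth :: "(nat \<Rightarrow> 'e::complex_hilbert) set \<Rightarrow> (nat \<Rightarrow> 'e) set" where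
  "h2_orth S = {g \<in> H2. \<forall>f\<in>S. h2_inner g f = 0}"

definition h2_reducing :: "(nat \<Rightarrow> 'e::complex_hilbert) set \<Rightarrow> ((nat \<Rightarrow> 'e) \<Rightarrow> (nat \<Rightarrow> 'e)) \<Rightarrow> bool" where
  "h2_reducing S V \<longleftrightarrow> V ` S \<subseteq> S \<and> V ` h2_orth S \<subseteq> h2_orth S"

text \<open>\<open>I \<otimes> A\<close> acts coefficientwise; \<open>M\<^sub>z \<otimes> A\<close> shifts coefficients by one and applies \<open>A\<close>.
  \<open>P\<^sup>\<perp> = I - P\<close> and \<open>U\<^sup>* = U\<^sup>-\<^sup>1\<close> (U unitary).\<close>

definition BCL_V1 :: "('e::complex_hilbert \<Rightarrow> 'e) \<Rightarrow> ('e \<Rightarrow> 'e) \<Rightarrow> (nat \<Rightarrow> 'e) \<Rightarrow> (nat \<Rightarrow> 'e)" where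
  "BCL_V1 U P f = (\<lambda>n. P (inv U (f n))
      + (if n = 0 then 0 else inv U (f (n - 1)) - P (inv U (f (n - 1)))))"

definition BCL_V2 :: "('e::complex_hilbert \<Rightarrow> 'e) \<Rightarrow> ('e \<Rightarrow> 'e) \<Rightarrow> (nat \<Rightarrow> 'e) \<Rightarrow> (nat \<Rightarrow> 'e)" where
  "BCL_V2 U P f = (\<lambda>n. U ((if n = 0 then 0 else P (f (n - 1))) + (f n - P (f n))))"

end

theory Submission
  imports Defs
begin

text \<open>Since \<open>V\<^sub>1 V\<^sub>2 = M\<^sub>z \<otimes> I\<close>, a subspace \<open>\<S>\<close> reducing \<open>V\<^sub>1\<close> and \<open>V\<^sub>2\<close> reduces the shift, so it is
  invariant under the shift and, being equal to \<open>\<S>\<^sup>\<perp>\<^sup>\<perp>\<close>, under the backward shift. Then \<open>\<S> = H\<^sup>2_{\<E>'}\<close>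
  for the space \<open>\<E>'\<close> of constants in \<open>\<S>\<close>: the constant coefficient of \<open>f \<in> \<S>\<close> is
  \<open>f - M\<^sub>z M\<^sub>z\<^sup>* f \<in> \<S>\<close>, and \<open>\<E>'\<close>-valued polynomials are dense in \<open>H\<^sup>2_{\<E>'}\<close>. Applying \<open>V\<^sub>2\<close> and \<open>V\<^sub>1\<close>
  to constants \<open>x\<close> yields the coefficients \<open>U P\<^sup>\<perp> x, U P x\<close> and \<open>P U\<^sup>* x\<close>, so \<open>\<E>'\<close> and likewise
  \<open>\<E>'\<^sup>\<perp>\<close> are invariant under \<open>U\<close> and \<open>P\<close>. Conversely, \<open>V\<^sub>1\<close> and \<open>V\<^sub>2\<close> act coefficientwise through
  \<open>U\<close>, \<open>U\<^sup>*\<close> and \<open>P\<close>, which preserve \<open>\<E>'\<close> and \<open>\<E>'\<^sup>\<perp>\<close>.\<close>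

lemma scaleC_zero_right [simp]: "a *\<^sub>C 0 = 0"
  using scaleC_add_right[of a 0 0] by simp

lemma scaleC_zero_left [simp]: "0 *\<^sub>C x = 0"
  using scaleC_add_left[of 0 0 x] by simp

lemma scaleC_minus_one: "(-1) *\<^sub>C x = - x"
proof -
  have "(-1) *\<^sub>C x + x = 0" using scaleC_add_left[of "-1" 1 x] by (simp add: scaleC_one)
  thus ?thesis by (simp add: eq_neg_iff_add_eq_0)
qed

lemma scaleC_minus_right: "a *\<^sub>C (- x) = - (a *\<^sub>C x)"
  using scaleC_add_right[of a "-x" x] by (simp add: add_eq_0_iff2)

lemma scaleC_diff_right: "a *\<^sub>C (x - y) = a *\<^sub>C x - a *\<^sub>C y"
  by (simp only: diff_conv_add_uminus scaleC_add_right scaleC_minus_right)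

lemma cinner_zero_left [simp]: "cinner 0 y = 0"
  using cinner_add_left[of 0 0 y] by simp

lemma cinner_zero_right [simp]: "cinner x 0 = 0"
  using cinner_commute[of 0 x] by simp

lemma cinner_add_right: "cinner x (y + z) = cinner x y + cinner x z"
  by (metis cinner_commute cinner_add_left complex_cnj_add)

lemma cinner_scaleC_right: "cinner x (a *\<^sub>C y) = cnj a * cinner x y"
  by (metis cinner_commute cinner_scaleC_left complex_cnj_mult)

lemma cinner_minus_left: "cinner (- x) y = - cinner x y"
  using cinner_add_left[of x "-x" y] by (simp add: add_eq_0_iff2)

lemma cinner_minus_right: "cinner x (- y) = - cinner x y"
  by (metis cinner_commute cinner_minus_left complex_cnj_minus)

lemma cinner_diff_left: "cinner (x - y) z = cinner x z - cinner y z"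
  by (simp only: diff_conv_add_uminus cinner_add_left cinner_minus_left)

lemma cinner_diff_right: "cinner x (y - z) = cinner x y - cinner x z"
  by (simp only: diff_conv_add_uminus cinner_add_right cinner_minus_right)

lemma cinner_eq_zero_commute: "cinner x y = 0 \<longleftrightarrow> cinner y x = 0"
  by (metis cinner_commute complex_cnj_zero)

lemma cinner_self_eq_0 [simp]: "cinner x x = 0 \<longleftrightarrow> x = 0"
  using cinner_eq_zero by auto

lemma cinner_self_cnorm: "cinner x x = complex_of_real ((cnorm x)\<^sup>2)"
proof -
  have "cinner x x \<in> \<real>"
    using cinner_commute[of x x] by (simp add: Reals_cnj_iff)
  thus ?thesis unfolding cnorm_def using cinner_nonneg[of x] by (simp add: complex_is_Real_iff)
qed

lemma cnorm_sq: "(cnorm x)\<^sup>2 = Re (cinner x x)"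
  by (simp add: cinner_self_cnorm)

lemma cnorm_nonneg: "0 \<le> cnorm x"
  unfolding cnorm_def using cinner_nonneg[of x] by simp

lemma cnorm_eq_0 [simp]: "cnorm x = 0 \<longleftrightarrow> x = 0"
  by (metis cinner_self_cnorm cinner_self_eq_0 of_real_eq_0_iff zero_eq_power2)

lemma cnorm_zero [simp]: "cnorm 0 = 0"
  by simp

lemma cnorm_pos: "x \<noteq> 0 \<Longrightarrow> 0 < (cnorm x)\<^sup>2"
  using cnorm_eq_0 by simp

lemma cnorm_minus: "cnorm (- x) = cnorm x"
  unfolding cnorm_def by (simp add: cinner_minus_left cinner_minus_right)

lemma cnorm_diff_commute: "cnorm (x - y) = cnorm (y - x)"
  using cnorm_minus[of "x - y"] by simp

lemma cnorm_sq_add: "(cnorm (x + y))\<^sup>2 = (cnorm x)\<^sup>2 + (cnorm y)\<^sup>2 + 2 * Re (cinner x y)"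
proof -
  have "cinner (x + y) (x + y) = cinner x x + cinner y y + (cinner x y + cnj (cinner x y))"
    by (simp add: cinner_add_left cinner_add_right cinner_commute[of y x])
  thus ?thesis by (simp add: cnorm_sq)
qed

lemma parallelogram_law:
  "(cnorm (x + y))\<^sup>2 + (cnorm (x - y))\<^sup>2 = 2 * (cnorm x)\<^sup>2 + 2 * (cnorm y)\<^sup>2"
  using cnorm_sq_add[of x y] cnorm_sq_add[of x "- y"] by (simp add: cnorm_minus cinner_minus_right)

lemma cnorm_sq_add_le: "(cnorm (x + y))\<^sup>2 \<le> 2 * (cnorm x)\<^sup>2 + 2 * (cnorm y)\<^sup>2"
  using parallelogram_law[of x y] by (smt (verit) zero_le_power2)

lemma cnorm_scaleC: "cnorm (a *\<^sub>C x) = cmod a * cnorm x"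
proof -
  have "cinner (a *\<^sub>C x) (a *\<^sub>C x) = (a * cnj a) * cinner x x"
    by (simp add: cinner_scaleC_left cinner_scaleC_right)
  also have "\<dots> = complex_of_real ((cmod a)\<^sup>2 * (cnorm x)\<^sup>2)"
    by (simp only: complex_norm_square[symmetric] cinner_self_cnorm of_real_mult)
  finally have "(cnorm (a *\<^sub>C x))\<^sup>2 = (cmod a * cnorm x)\<^sup>2"
    by (simp add: cnorm_sq power_mult_distrib)
  thus ?thesis by (simp add: cnorm_nonneg power2_eq_iff_nonneg)
qed

lemma cnorm_sq_diff_line_projection:
  assumes "y \<noteq> 0"
  shows "(cnorm (x - (cinner x y / cinner y y) *\<^sub>C y))\<^sup>2 = (cnorm x)\<^sup>2 - (cmod (cinner x y))\<^sup>2 / (cnorm y)\<^sup>2"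
proof -
  define a n where "a = cinner x y" and "n = (cnorm y)\<^sup>2"
  define c where "c = a / complex_of_real n"
  have yy: "cinner y y = complex_of_real n" unfolding n_def by (rule cinner_self_cnorm)
  have nz: "complex_of_real n \<noteq> 0" using cnorm_pos[OF assms] unfolding n_def by simp
  have expand: "cinner (x - c *\<^sub>C y) (x - c *\<^sub>C y)
      = cinner x x - cnj c * a - c * cnj a + c * cnj c * complex_of_real n"
    by (simp add: cinner_diff_left cinner_diff_right cinner_scaleC_left cinner_scaleC_right
        yy cinner_commute[of y x] a_def[symmetric] algebra_simps)
  have terms: "cnj c * a = a * cnj a / complex_of_real n" "c * cnj a = a * cnj a / complex_of_real n"
    "c * cnj c * complex_of_real n = a * cnj a / complex_of_real n"
    using nz unfolding c_def by (simp_all add: field_simps)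
  have "a * cnj a = complex_of_real ((cmod a)\<^sup>2)"
    by (rule complex_norm_square[symmetric])
  hence "cinner (x - c *\<^sub>C y) (x - c *\<^sub>C y) = cinner x x - complex_of_real ((cmod a)\<^sup>2 / n)"
    unfolding expand terms by simp
  hence "(cnorm (x - c *\<^sub>C y))\<^sup>2 = (cnorm x)\<^sup>2 - (cmod a)\<^sup>2 / n"
    by (simp add: cnorm_sq)
  moreover have "c = cinner x y / cinner y y"
    unfolding c_def a_def yy ..
  ultimately show ?thesis unfolding a_def n_def by simp
qed

lemma cauchy_schwarz: "cmod (cinner x y) \<le> cnorm x * cnorm y"
proof (cases "y = 0")
  case False
  have "(cmod (cinner x y))\<^sup>2 / (cnorm y)\<^sup>2 \<le> (cnorm x)\<^sup>2"
    using cnorm_sq_diff_line_projection[OF False, of x] by (smt (verit) zero_le_power2)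
  hence "(cmod (cinner x y))\<^sup>2 \<le> (cnorm x * cnorm y)\<^sup>2"
    using cnorm_pos[OF False] by (simp add: divide_le_eq power_mult_distrib)
  thus ?thesis using cnorm_nonneg[of x] cnorm_nonneg[of y]
    by (meson mult_nonneg_nonneg power2_le_imp_le)
qed simp

lemma cnorm_triangle: "cnorm (x + y) \<le> cnorm x + cnorm y"
proof -
  have "Re (cinner x y) \<le> cnorm x * cnorm y"
    using cauchy_schwarz[of x y] abs_Re_le_cmod[of "cinner x y"] by linarith
  hence "(cnorm (x + y))\<^sup>2 \<le> (cnorm x + cnorm y)\<^sup>2"
    by (simp add: cnorm_sq_add power2_sum)
  thus ?thesis using cnorm_nonneg[of x] cnorm_nonneg[of y]
    by (meson add_nonneg_nonneg power2_le_imp_le)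
qed

lemma cnorm_reverse_triangle: "\<bar>cnorm x - cnorm y\<bar> \<le> cnorm (x - y)"
  using cnorm_triangle[of "x - y" y] cnorm_triangle[of "y - x" x] cnorm_diff_commute[of x y]
  by simp

section \<open>Closed subspaces and orthogonal complements\<close>

lemma closed_subspace_zero: "closed_subspace M \<Longrightarrow> 0 \<in> M"
  unfolding closed_subspace_def by blast

lemma closed_subspace_add: "closed_subspace M \<Longrightarrow> x \<in> M \<Longrightarrow> y \<in> M \<Longrightarrow> x + y \<in> M"
  unfolding closed_subspace_def by blast

lemma closed_subspace_scaleC: "closed_subspace M \<Longrightarrow> x \<in> M \<Longrightarrow> a *\<^sub>C x \<in> M"
  unfolding closed_subspace_def by blast

lemma closed_subspace_diff:
  assumes "closed_subspace M" "x \<in> M" "y \<in> M"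
  shows "x - y \<in> M"
  using closed_subspace_add[OF assms(1,2) closed_subspace_scaleC[OF assms(1,3), of "-1"]]
  by (simp add: scaleC_minus_one)

lemma closed_subspace_orth: "closed_subspace (orth M)"
  unfolding closed_subspace_def
proof (intro conjI ballI allI impI)
  show "0 \<in> orth M"
    unfolding orth_def by simp
  show "x + y \<in> orth M" if "x \<in> orth M" "y \<in> orth M" for x y
    using that unfolding orth_def by (simp add: cinner_add_left)
  show "a *\<^sub>C x \<in> orth M" if "x \<in> orth M" for a x
    using that unfolding orth_def by (simp add: cinner_scaleC_left)
  show "L \<in> orth M" if "(\<forall>n. X n \<in> orth M) \<and> (\<lambda>n. cnorm (X n - L)) \<longlonglongrightarrow> 0" for X L
    unfolding orth_def
  proof (intro CollectI ballI)
    fix y assume y: "y \<in> M"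
    have "cinner L y = - cinner (X n - L) y" for n
      using that y unfolding orth_def by (simp add: cinner_diff_left)
    hence "cmod (cinner L y) \<le> cnorm (X n - L) * cnorm y" for n
      by (metis cauchy_schwarz norm_minus_cancel)
    moreover have "(\<lambda>n. cnorm (X n - L) * cnorm y) \<longlonglongrightarrow> 0"
      using that by (simp add: tendsto_mult_left_zero)
    ultimately have "cmod (cinner L y) \<le> 0"
      using LIMSEQ_le_const by blast
    thus "cinner L y = 0" by simp
  qed
qed

lemma cnorm_Cauchy_convergent:
  assumes "\<forall>e>0. \<exists>N. \<forall>p\<ge>N. \<forall>q\<ge>N. cnorm (X p - X q) < e"
  shows "\<exists>L. (\<lambda>n. cnorm (X n - L)) \<longlonglongrightarrow> 0"
  using cinner_complete[of X] assms unfolding cnorm_def by blast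

text \<open>Parallelogram law applied to \<open>x - m\<^sub>j\<close> and \<open>x - m\<^sub>k\<close>, whose half-sum is \<open>x\<close> minus a point of \<open>M\<close>.\<close>
lemma minimising_sequence_Cauchy:
  assumes M: "closed_subspace M" and lowD: "\<And>m. m \<in> M \<Longrightarrow> D \<le> (cnorm (x - m))\<^sup>2"
    and mM: "\<And>k. m k \<in> M" and mlt: "\<And>k. (cnorm (x - m k))\<^sup>2 < D + inverse (real (Suc k))"
  shows "(cnorm (m j - m k))\<^sup>2 \<le> 2 * inverse (real (Suc j)) + 2 * inverse (real (Suc k))"
proof -
  define mid where "mid = (1/2) *\<^sub>C (m j + m k)"
  have "mid \<in> M"
    unfolding mid_def using mM M closed_subspace_add closed_subspace_scaleC by blast
  hence "4 * D \<le> (cnorm ((2::complex) *\<^sub>C (x - mid)))\<^sup>2"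
    using lowD by (simp add: cnorm_scaleC power_mult_distrib)
  also have "(2::complex) *\<^sub>C (x - mid) = (x - m j) + (x - m k)"
    unfolding mid_def scaleC_diff_right scaleC_scaleC
    using scaleC_add_left[of 1 1 x] by (simp add: scaleC_one)
  finally have "4 * D \<le> (cnorm ((x - m j) + (x - m k)))\<^sup>2" .
  moreover have "(cnorm ((x - m j) - (x - m k)))\<^sup>2 = (cnorm (m j - m k))\<^sup>2"
    using cnorm_diff_commute[of "m k" "m j"] by (simp add: algebra_simps)
  ultimately show ?thesis
    using parallelogram_law[of "x - m j" "x - m k"] mlt[of j] mlt[of k] by linarith
qed

lemma closed_subspace_nearest_point:
  fixes M :: "'a::complex_hilbert set"
  assumes M: "closed_subspace M"
  shows "\<exists>L\<in>M. \<forall>m\<in>M. (cnorm (x - L))\<^sup>2 \<le> (cnorm (x - m))\<^sup>2"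
proof -
  define D where "D = (INF m\<in>M. (cnorm (x - m))\<^sup>2)"
  have M0: "M \<noteq> {}" using closed_subspace_zero[OF M] by blast
  have lowD: "D \<le> (cnorm (x - m))\<^sup>2" if "m \<in> M" for m
    unfolding D_def using that by (auto intro!: cINF_lower bdd_belowI2[of _ 0])
  have "\<exists>m\<in>M. (cnorm (x - m))\<^sup>2 < D + inverse (real (Suc k))" for k
    using cInf_lessD[of "(\<lambda>m. (cnorm (x - m))\<^sup>2) ` M" "D + inverse (real (Suc k))"] M0
    unfolding D_def by auto
  then obtain m where mM: "\<And>k. m k \<in> M"
    and mlt: "\<And>k. (cnorm (x - m k))\<^sup>2 < D + inverse (real (Suc k))"
    by metis
  note cauchy_sq = minimising_sequence_Cauchy[OF M lowD mM mlt]
  have "\<exists>L. (\<lambda>n. cnorm (m n - L)) \<longlonglongrightarrow> 0"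
  proof (rule cnorm_Cauchy_convergent, intro allI impI)
    fix e :: real assume e: "e > 0"
    obtain N where N: "inverse (real (Suc N)) < e\<^sup>2 / 4"
      using reals_Archimedean e by (metis divide_pos_pos zero_less_numeral zero_less_power)
    show "\<exists>N. \<forall>p\<ge>N. \<forall>q\<ge>N. cnorm (m p - m q) < e"
    proof (intro exI allI impI)
      fix p q assume "p \<ge> N" "q \<ge> N"
      hence "inverse (real (Suc p)) \<le> inverse (real (Suc N))"
        "inverse (real (Suc q)) \<le> inverse (real (Suc N))"
        by (simp_all add: le_imp_inverse_le)
      hence "(cnorm (m p - m q))\<^sup>2 < e\<^sup>2" using cauchy_sq[of p q] N by linarith
      thus "cnorm (m p - m q) < e"
        using e by (simp add: power_less_imp_less_base)
    qed
  qed
  then obtain L where L: "(\<lambda>n. cnorm (m n - L)) \<longlonglongrightarrow> 0" by blast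
  have "(\<lambda>k. (cnorm (x - m k))\<^sup>2) \<longlonglongrightarrow> D"
  proof (rule tendsto_sandwich[of "\<lambda>k. D" _ _ "\<lambda>k. D + inverse (real (Suc k))"])
    show "\<forall>\<^sub>F k in sequentially. D \<le> (cnorm (x - m k))\<^sup>2"
      using lowD mM by auto
    show "\<forall>\<^sub>F k in sequentially. (cnorm (x - m k))\<^sup>2 \<le> D + inverse (real (Suc k))"
      using mlt by (intro always_eventually allI less_imp_le)
    show "(\<lambda>k. D + inverse (real (Suc k))) \<longlonglongrightarrow> D"
      using LIMSEQ_inverse_real_of_nat_add[of D] by simp
  qed simp
  hence "(\<lambda>k. sqrt ((cnorm (x - m k))\<^sup>2)) \<longlonglongrightarrow> sqrt D"
    by (rule tendsto_real_sqrt)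
  hence "(\<lambda>k. cnorm (x - m k) + cnorm (m k - L)) \<longlonglongrightarrow> sqrt D + 0"
    using L by (intro tendsto_add) (simp_all add: cnorm_nonneg)
  moreover have "cnorm (x - L) \<le> cnorm (x - m k) + cnorm (m k - L)" for k
    using cnorm_triangle[of "x - m k" "m k - L"] by simp
  ultimately have "cnorm (x - L) \<le> sqrt D"
    by (intro LIMSEQ_le_const[where X="\<lambda>k. cnorm (x - m k) + cnorm (m k - L)"]) simp_all
  hence "(cnorm (x - L))\<^sup>2 \<le> D"
    using cnorm_nonneg by (metis real_sqrt_le_iff real_sqrt_pow2 real_sqrt_unique sqrt_le_D)
  moreover have "L \<in> M" using M mM L unfolding closed_subspace_def by blast
  ultimately show ?thesis using lowD by force
qed

text \<open>Moving the nearest point along \<open>y\<close> by the Fourier coefficient of \<open>x - L\<close> would decrease the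
  distance unless that coefficient vanishes.\<close>
lemma nearest_point_orth:
  assumes M: "closed_subspace M" and L: "L \<in> M"
    and nearest: "\<And>m. m \<in> M \<Longrightarrow> (cnorm (x - L))\<^sup>2 \<le> (cnorm (x - m))\<^sup>2"
  shows "x - L \<in> orth M"
proof -
  have "cinner (x - L) y = 0" if yM: "y \<in> M" for y
  proof (cases "y = 0")
    case y0: False
    define t where "t = cinner (x - L) y / cinner y y"
    have "L + t *\<^sub>C y \<in> M" using L yM M closed_subspace_add closed_subspace_scaleC by blast
    moreover have "x - (L + t *\<^sub>C y) = (x - L) - t *\<^sub>C y" by simp
    ultimately have "(cnorm (x - L))\<^sup>2 \<le> (cnorm ((x - L) - t *\<^sub>C y))\<^sup>2" using nearest by metis
    hence "(cmod (cinner (x - L) y))\<^sup>2 / (cnorm y)\<^sup>2 \<le> 0"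
      using cnorm_sq_diff_line_projection[OF y0, of "x - L"] unfolding t_def by linarith
    thus ?thesis using cnorm_pos[OF y0] by (simp add: divide_le_0_iff)
  qed simp
  thus ?thesis unfolding orth_def by blast
qed

lemma closed_subspace_orth_decomp:
  assumes "closed_subspace M"
  shows "\<exists>m\<in>M. x - m \<in> orth M"
  using closed_subspace_nearest_point[OF assms] nearest_point_orth[OF assms] by blast

lemma orth_orth_subset:
  assumes "closed_subspace M"
  shows "orth (orth M) \<subseteq> M"
proof
  fix y assume y: "y \<in> orth (orth M)"
  obtain m where mM: "m \<in> M" and z: "y - m \<in> orth M"
    using closed_subspace_orth_decomp[OF assms] by blast
  have "cinner y (y - m) = 0" using y z unfolding orth_def by blast
  moreover have "cinner m (y - m) = 0"
    using z mM cinner_eq_zero_commute unfolding orth_def by blast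
  ultimately have "cinner (y - m) (y - m) = 0" by (simp add: cinner_diff_left)
  thus "y \<in> M" using mM by simp
qed

section \<open>The Hardy space \<open>H\<^sup>2_\<E>\<close> is a Hilbert space\<close>

lemma H2_iff: "f \<in> H2 \<longleftrightarrow> summable (\<lambda>n. (cnorm (f n))\<^sup>2)"
  unfolding H2_def by simp

lemma H2_zero: "(\<lambda>n. 0) \<in> H2"
  unfolding H2_iff by simp

lemma H2_add:
  assumes "f \<in> H2" "g \<in> H2"
  shows "(\<lambda>n. f n + g n) \<in> H2"
proof -
  have "summable (\<lambda>n. 2 * (cnorm (f n))\<^sup>2 + 2 * (cnorm (g n))\<^sup>2)"
    using assms unfolding H2_iff by (auto intro!: summable_add summable_mult)
  thus ?thesis unfolding H2_iff
    by (rule summable_comparison_test'[where N=0]) (simp add: cnorm_sq_add_le)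
qed

lemma H2_scaleC: "f \<in> H2 \<Longrightarrow> (\<lambda>n. a *\<^sub>C f n) \<in> H2"
  unfolding H2_iff by (simp add: cnorm_scaleC power_mult_distrib summable_mult)

lemma H2_uminus: "f \<in> H2 \<Longrightarrow> (\<lambda>n. - f n) \<in> H2"
  unfolding H2_iff by (simp add: cnorm_minus)

lemma H2_diff: "f \<in> H2 \<Longrightarrow> g \<in> H2 \<Longrightarrow> (\<lambda>n. f n - g n) \<in> H2"
  using H2_add[of f "\<lambda>n. - g n"] H2_uminus[of g] by simp

lemma
  assumes "h2_closed_subspace S"
  shows h2_closed_subspace_subset: "S \<subseteq> H2"
    and h2_closed_subspace_zero: "(\<lambda>n. 0) \<in> S"
    and h2_closed_subspace_add: "f \<in> S \<Longrightarrow> g \<in> S \<Longrightarrow> (\<lambda>n. f n + g n) \<in> S"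
    and h2_closed_subspace_scaleC: "f \<in> S \<Longrightarrow> (\<lambda>n. a *\<^sub>C f n) \<in> S"
    and h2_closed_subspace_limit: "(\<And>k. X k \<in> S) \<Longrightarrow> L \<in> H2 \<Longrightarrow>
      (\<lambda>k. h2_norm (\<lambda>n. X k n - L n)) \<longlonglongrightarrow> 0 \<Longrightarrow> L \<in> S"
  using assms unfolding h2_closed_subspace_def by blast+

lemma h2_closed_subspace_diff:
  assumes "h2_closed_subspace S" "f \<in> S" "g \<in> S"
  shows "(\<lambda>n. f n - g n) \<in> S"
  using h2_closed_subspace_add[OF assms(1,2) h2_closed_subspace_scaleC[OF assms(1,3), of "-1"]]
  by (simp add: scaleC_minus_one)

lemma summable_cinner_H2:
  assumes "f \<in> H2" "g \<in> H2"
  shows "summable (\<lambda>n. cinner (f n) (g n))"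
proof (rule summable_norm_cancel)
  have bound: "summable (\<lambda>n. ((cnorm (f n))\<^sup>2 + (cnorm (g n))\<^sup>2) / 2)"
    using assms unfolding H2_iff by (auto intro!: summable_add summable_divide)
  have le: "cmod (cinner (f n) (g n)) \<le> ((cnorm (f n))\<^sup>2 + (cnorm (g n))\<^sup>2) / 2" for n
    using cauchy_schwarz[of "f n" "g n"] sum_squares_bound[of "cnorm (f n)" "cnorm (g n)"]
    by (simp add: field_simps)
  show "summable (\<lambda>n. norm (cinner (f n) (g n)))"
    by (rule summable_comparison_test'[where N=0, OF bound]) (simp only: real_norm_def abs_norm_cancel le)
qed

lemma h2_norm_nonneg: "f \<in> H2 \<Longrightarrow> 0 \<le> h2_norm f"
  unfolding h2_norm_def H2_iff by (simp add: suminf_nonneg)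

lemma h2_norm_sq: "f \<in> H2 \<Longrightarrow> (h2_norm f)\<^sup>2 = (\<Sum>n. (cnorm (f n))\<^sup>2)"
  unfolding h2_norm_def H2_iff by (intro real_sqrt_pow2 suminf_nonneg) auto

lemma cinner_self_h2_norm:
  assumes "f \<in> H2"
  shows "h2_inner f f = complex_of_real ((h2_norm f)\<^sup>2)"
proof -
  have "h2_inner f f = (\<Sum>n. complex_of_real ((cnorm (f n))\<^sup>2))"
    unfolding h2_inner_def by (simp only: cinner_self_cnorm)
  also have "\<dots> = complex_of_real ((h2_norm f)\<^sup>2)"
    using assms unfolding h2_norm_sq[OF assms] H2_iff by (rule suminf_of_real[symmetric])
  finally show ?thesis .
qed

lemma cnorm_le_h2_norm:
  assumes "f \<in> H2"
  shows "cnorm (f i) \<le> h2_norm f"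
proof -
  have "(\<Sum>n\<in>{i}. (cnorm (f n))\<^sup>2) \<le> (\<Sum>n. (cnorm (f n))\<^sup>2)"
    using assms unfolding H2_iff by (intro sum_le_suminf) auto
  hence "(cnorm (f i))\<^sup>2 \<le> (h2_norm f)\<^sup>2"
    using h2_norm_sq[OF assms] by simp
  thus ?thesis
    using h2_norm_nonneg[OF assms] by (rule power2_le_imp_le)
qed

text \<open>Each partial sum of \<open>\<parallel>Y k - L\<parallel>\<^sup>2\<close> is the limit in \<open>m\<close> of the corresponding partial sum of \<open>\<parallel>Y k - Y m\<parallel>\<^sup>2\<close>.\<close>
lemma H2_Cauchy_tail_bound:
  assumes Y: "\<And>k. Y k \<in> H2"
    and L: "\<And>i. (\<lambda>k. cnorm (Y k i - L i)) \<longlonglongrightarrow> 0"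
    and N: "\<And>m n. m \<ge> N \<Longrightarrow> n \<ge> N \<Longrightarrow> h2_norm (\<lambda>i. Y m i - Y n i) < e"
    and k: "k \<ge> N"
  shows "(\<lambda>i. Y k i - L i) \<in> H2" and "h2_norm (\<lambda>i. Y k i - L i) \<le> e"
proof -
  have lim_coeff: "(\<lambda>m. cnorm (Y k i - Y m i)) \<longlonglongrightarrow> cnorm (Y k i - L i)" for i
  proof -
    have "\<bar>cnorm (Y k i - Y m i) - cnorm (Y k i - L i)\<bar> \<le> cnorm (Y m i - L i)" for m
      using cnorm_reverse_triangle[of "Y k i - Y m i" "Y k i - L i"] cnorm_diff_commute[of "L i" "Y m i"]
      by (simp add: algebra_simps)
    hence "\<forall>\<^sub>F m in sequentially. cnorm (Y k i - L i) - cnorm (Y m i - L i) \<le> cnorm (Y k i - Y m i)"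
      "\<forall>\<^sub>F m in sequentially. cnorm (Y k i - Y m i) \<le> cnorm (Y k i - L i) + cnorm (Y m i - L i)"
      by (auto intro!: always_eventually simp: abs_le_iff algebra_simps)
    moreover have "(\<lambda>m. cnorm (Y k i - L i) - cnorm (Y m i - L i)) \<longlonglongrightarrow> cnorm (Y k i - L i)"
      "(\<lambda>m. cnorm (Y k i - L i) + cnorm (Y m i - L i)) \<longlonglongrightarrow> cnorm (Y k i - L i)"
      using tendsto_diff[OF tendsto_const L[of i]] tendsto_add[OF tendsto_const L[of i]] by simp_all
    ultimately show ?thesis by (rule tendsto_sandwich)
  qed
  have partial: "(\<Sum>i<M. (cnorm (Y k i - L i))\<^sup>2) \<le> e\<^sup>2" for M
  proof (rule LIMSEQ_le_const2)
    show "(\<lambda>m. \<Sum>i<M. (cnorm (Y k i - Y m i))\<^sup>2) \<longlonglongrightarrow> (\<Sum>i<M. (cnorm (Y k i - L i))\<^sup>2)"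
      by (intro tendsto_sum tendsto_power lim_coeff)
    have "(\<Sum>i<M. (cnorm (Y k i - Y m i))\<^sup>2) \<le> e\<^sup>2" if "m \<ge> N" for m
    proof -
      have "(\<Sum>i<M. (cnorm (Y k i - Y m i))\<^sup>2) \<le> (h2_norm (\<lambda>i. Y k i - Y m i))\<^sup>2"
        using H2_diff[OF Y Y, of k m] unfolding h2_norm_sq[OF H2_diff[OF Y Y]] H2_iff
        by (intro sum_le_suminf) auto
      also have "\<dots> \<le> e\<^sup>2"
        using N[OF k that] h2_norm_nonneg[OF H2_diff[OF Y Y]] by (simp add: power_mono)
      finally show ?thesis .
    qed
    thus "\<exists>N. \<forall>m\<ge>N. (\<Sum>i<M. (cnorm (Y k i - Y m i))\<^sup>2) \<le> e\<^sup>2" by blast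
  qed
  show H: "(\<lambda>i. Y k i - L i) \<in> H2"
    unfolding H2_iff by (rule summableI_nonneg_bounded[where x="e\<^sup>2"]) (auto intro: partial)
  have "(h2_norm (\<lambda>i. Y k i - L i))\<^sup>2 \<le> e\<^sup>2"
    using H unfolding h2_norm_sq[OF H] H2_iff by (rule suminf_le_const) (auto intro: partial)
  moreover have "0 \<le> e"
    using N[OF k k] h2_norm_nonneg[OF H2_diff[OF Y Y]] by (meson order.trans less_imp_le)
  ultimately show "h2_norm (\<lambda>i. Y k i - L i) \<le> e"
    using power2_le_imp_le by blast
qed

lemma H2_complete:
  assumes Y: "\<And>k. Y k \<in> H2"
    and Cauchy: "\<forall>e>0. \<exists>N. \<forall>m\<ge>N. \<forall>n\<ge>N. h2_norm (\<lambda>i. Y m i - Y n i) < e"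
  shows "\<exists>L\<in>H2. (\<lambda>k. h2_norm (\<lambda>i. Y k i - L i)) \<longlonglongrightarrow> 0"
proof -
  have "\<exists>l. (\<lambda>k. cnorm (Y k i - l)) \<longlonglongrightarrow> 0" for i
  proof (rule cnorm_Cauchy_convergent, intro allI impI)
    fix e :: real assume "e > 0"
    then obtain N where "\<forall>m\<ge>N. \<forall>n\<ge>N. h2_norm (\<lambda>i. Y m i - Y n i) < e" using Cauchy by blast
    thus "\<exists>N. \<forall>m\<ge>N. \<forall>n\<ge>N. cnorm (Y m i - Y n i) < e"
      using cnorm_le_h2_norm[OF H2_diff[OF Y Y]] by (meson order.strict_trans1)
  qed
  then obtain L where L: "\<And>i. (\<lambda>k. cnorm (Y k i - L i)) \<longlonglongrightarrow> 0" by metis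
  obtain N1 where "\<forall>m\<ge>N1. \<forall>n\<ge>N1. h2_norm (\<lambda>i. Y m i - Y n i) < 1" using Cauchy by force
  hence "(\<lambda>i. Y N1 i - L i) \<in> H2" using H2_Cauchy_tail_bound[OF Y L] by blast
  hence "(\<lambda>i. Y N1 i - (Y N1 i - L i)) \<in> H2" by (rule H2_diff[OF Y])
  hence LH: "L \<in> H2" by simp
  have "(\<lambda>k. h2_norm (\<lambda>i. Y k i - L i)) \<longlonglongrightarrow> 0"
  proof (rule LIMSEQ_I)
    fix r :: real assume "r > 0"
    then obtain N where "\<forall>m\<ge>N. \<forall>n\<ge>N. h2_norm (\<lambda>i. Y m i - Y n i) < r / 2"
      using Cauchy by (meson half_gt_zero)
    hence "h2_norm (\<lambda>i. Y k i - L i) \<le> r / 2" "0 \<le> h2_norm (\<lambda>i. Y k i - L i)" if "k \<ge> N" for k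
      using H2_Cauchy_tail_bound[OF Y L _ that] h2_norm_nonneg by blast+
    thus "\<exists>N. \<forall>k\<ge>N. norm (h2_norm (\<lambda>i. Y k i - L i) - 0) < r"
      using \<open>r > 0\<close> by force
  qed
  thus ?thesis using LH by blast
qed

typedef (overloaded) ('e::complex_hilbert) hardy = "H2 :: (nat \<Rightarrow> 'e) set"
  morphisms coeffs Abs_hardy
  using H2_zero by blast

lemma hardy_eqI: "(\<And>n. coeffs x n = coeffs y n) \<Longrightarrow> x = y"
  by (metis ext coeffs_inject)

lemma coeffs_H2 [simp]: "coeffs x \<in> H2"
  using coeffs by blast

instantiation hardy :: (complex_hilbert) complex_hilbert
begin

definition "0 = Abs_hardy (\<lambda>n. 0)"
definition "x + y = Abs_hardy (\<lambda>n. coeffs x n + coeffs y n)"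
definition "- x = Abs_hardy (\<lambda>n. - coeffs x n)"
definition "x - y = Abs_hardy (\<lambda>n. coeffs x n - coeffs y n)"
definition "a *\<^sub>C x = Abs_hardy (\<lambda>n. a *\<^sub>C coeffs x n)"
definition "cinner x y = h2_inner (coeffs x) (coeffs y)"

lemma coeffs_zero [simp]: "coeffs 0 n = 0"
  unfolding zero_hardy_def by (simp add: Abs_hardy_inverse[OF H2_zero])

lemma coeffs_add [simp]: "coeffs (x + y) n = coeffs x n + coeffs y n"
  unfolding plus_hardy_def by (simp add: Abs_hardy_inverse[OF H2_add[OF coeffs_H2 coeffs_H2]])

lemma coeffs_uminus [simp]: "coeffs (- x) n = - coeffs x n"
  unfolding uminus_hardy_def by (simp add: Abs_hardy_inverse[OF H2_uminus[OF coeffs_H2]])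

lemma coeffs_diff [simp]: "coeffs (x - y) n = coeffs x n - coeffs y n"
  unfolding minus_hardy_def by (simp add: Abs_hardy_inverse[OF H2_diff[OF coeffs_H2 coeffs_H2]])

lemma coeffs_scaleC [simp]: "coeffs (a *\<^sub>C x) n = a *\<^sub>C coeffs x n"
  unfolding scaleC_hardy_def by (simp add: Abs_hardy_inverse[OF H2_scaleC[OF coeffs_H2]])

lemma cinner_hardy_self: "cinner x x = complex_of_real ((h2_norm (coeffs x))\<^sup>2)"
  unfolding cinner_hardy_def by (simp add: cinner_self_h2_norm)

instance
proof
  fix x y z :: "'a hardy" and a b :: complex and X :: "nat \<Rightarrow> 'a hardy"
  show "x + y + z = x + (y + z)" by (rule hardy_eqI) (simp add: add.assoc)
  show "x + y = y + x" by (rule hardy_eqI) (simp add: add.commute)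
  show "0 + x = x" by (rule hardy_eqI) simp
  show "- x + x = 0" by (rule hardy_eqI) simp
  show "x - y = x + - y" by (rule hardy_eqI) simp
  show "a *\<^sub>C (x + y) = a *\<^sub>C x + a *\<^sub>C y" by (rule hardy_eqI) (simp add: scaleC_add_right)
  show "(a + b) *\<^sub>C x = a *\<^sub>C x + b *\<^sub>C x" by (rule hardy_eqI) (simp add: scaleC_add_left)
  show "a *\<^sub>C (b *\<^sub>C x) = (a * b) *\<^sub>C x" by (rule hardy_eqI) (simp add: scaleC_scaleC)
  show "1 *\<^sub>C x = x" by (rule hardy_eqI) (simp add: scaleC_one)
  show "cinner (x + y) z = cinner x z + cinner y z"
    unfolding cinner_hardy_def h2_inner_def
    by (simp add: cinner_add_left suminf_add summable_cinner_H2)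
  show "cinner (a *\<^sub>C x) y = a * cinner x y"
    unfolding cinner_hardy_def h2_inner_def
    by (simp add: cinner_scaleC_left suminf_mult summable_cinner_H2)
  have "(\<lambda>n. cinner (coeffs x n) (coeffs y n)) sums h2_inner (coeffs x) (coeffs y)"
    unfolding h2_inner_def using summable_cinner_H2[OF coeffs_H2 coeffs_H2] by (rule summable_sums)
  hence "(\<lambda>n. cinner (coeffs y n) (coeffs x n)) sums cnj (h2_inner (coeffs x) (coeffs y))"
    using sums_cnj cinner_commute by (metis (no_types, lifting) sums_cong)
  thus "cinner y x = cnj (cinner x y)"
    unfolding cinner_hardy_def h2_inner_def[of "coeffs y"] by (rule sums_unique[symmetric])
  show "0 \<le> Re (cinner x x)"
    by (simp add: cinner_hardy_self)
  show "x = 0" if "cinner x x = 0"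
  proof (rule hardy_eqI)
    have "(\<Sum>n. (cnorm (coeffs x n))\<^sup>2) = 0"
      using that h2_norm_sq[OF coeffs_H2, of x] by (simp add: cinner_hardy_self)
    hence "(cnorm (coeffs x n))\<^sup>2 = 0" for n
      using coeffs_H2[of x] unfolding H2_iff by (subst (asm) suminf_eq_zero_iff) auto
    thus "coeffs x n = coeffs 0 n" for n by simp
  qed
  have dist: "sqrt (Re (cinner (X m - z) (X m - z))) = h2_norm (\<lambda>i. coeffs (X m) i - coeffs z i)"
    for m z
  proof -
    have "coeffs (X m - z) = (\<lambda>i. coeffs (X m) i - coeffs z i)" by (rule ext) simp
    thus ?thesis
      using h2_norm_nonneg[OF coeffs_H2, of "X m - z"] by (simp add: cinner_hardy_self)
  qed
  show "\<exists>L. (\<lambda>n. sqrt (Re (cinner (X n - L) (X n - L)))) \<longlonglongrightarrow> 0"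
    if Cauchy: "\<forall>e>0. \<exists>N. \<forall>m\<ge>N. \<forall>n\<ge>N. sqrt (Re (cinner (X m - X n) (X m - X n))) < e"
  proof -
    obtain L where "L \<in> H2" "(\<lambda>k. h2_norm (\<lambda>i. coeffs (X k) i - L i)) \<longlonglongrightarrow> 0"
      using H2_complete[of "\<lambda>k. coeffs (X k)"] Cauchy[unfolded dist] by auto
    hence "(\<lambda>n. sqrt (Re (cinner (X n - Abs_hardy L) (X n - Abs_hardy L)))) \<longlonglongrightarrow> 0"
      unfolding dist by (simp add: Abs_hardy_inverse)
    thus ?thesis by blast
  qed
qed

end

lemma h2_inner_commute: "f \<in> H2 \<Longrightarrow> g \<in> H2 \<Longrightarrow> h2_inner f g = cnj (h2_inner g f)"
  using cinner_commute[of "Abs_hardy g" "Abs_hardy f"] by (simp add: cinner_hardy_def Abs_hardy_inverse)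

lemma cnorm_hardy: "cnorm x = h2_norm (coeffs x)"
  unfolding cnorm_def by (simp add: cinner_hardy_self h2_norm_nonneg)

lemma coeffs_fun:
  "coeffs 0 = (\<lambda>n. 0)" "coeffs (x + y) = (\<lambda>n. coeffs x n + coeffs y n)"
  "coeffs (x - y) = (\<lambda>n. coeffs x n - coeffs y n)" "coeffs (a *\<^sub>C x) = (\<lambda>n. a *\<^sub>C coeffs x n)"
  by (simp_all add: fun_eq_iff)

lemma closed_subspace_coeffs_preimage:
  assumes S: "h2_closed_subspace S"
  shows "closed_subspace {x. coeffs x \<in> S}" (is "closed_subspace ?S'")
  unfolding closed_subspace_def
proof (intro conjI allI ballI impI)
  show "0 \<in> ?S'"
    using h2_closed_subspace_zero[OF S] by (simp add: coeffs_fun)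
  show "x + y \<in> ?S'" if "x \<in> ?S'" "y \<in> ?S'" for x y
    using h2_closed_subspace_add[OF S] that by (simp add: coeffs_fun)
  show "a *\<^sub>C x \<in> ?S'" if "x \<in> ?S'" for a x
    using h2_closed_subspace_scaleC[OF S] that by (simp add: coeffs_fun)
  show "L \<in> ?S'" if "(\<forall>n. X n \<in> ?S') \<and> (\<lambda>n. cnorm (X n - L)) \<longlonglongrightarrow> 0" for X L
    using h2_closed_subspace_limit[OF S, of "\<lambda>k. coeffs (X k)" "coeffs L"] that
    by (simp add: cnorm_hardy coeffs_fun)
qed

text \<open>Through \<open>'e hardy\<close>, the projection theorem applies to closed subspaces of \<open>H\<^sup>2_\<E>\<close>.\<close>
lemma h2_orth_orth_subset:
  assumes S: "h2_closed_subspace S"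
  shows "h2_orth (h2_orth S) \<subseteq> S"
proof
  fix g assume g: "g \<in> h2_orth (h2_orth S)"
  have SH: "S \<subseteq> H2" by (rule h2_closed_subspace_subset[OF S])
  define S' where "S' = {x. coeffs x \<in> S}"
  have mem: "Abs_hardy f \<in> S' \<longleftrightarrow> f \<in> S" if "f \<in> H2" for f
    using that by (simp add: S'_def Abs_hardy_inverse)
  have "Abs_hardy g \<in> orth (orth S')"
    unfolding orth_def
  proof (intro CollectI ballI)
    fix z assume z: "z \<in> {x. \<forall>y\<in>S'. cinner x y = 0}"
    have "coeffs z \<in> h2_orth S"
      unfolding h2_orth_def
    proof (intro CollectI conjI ballI)
      fix f assume "f \<in> S"
      hence "cinner z (Abs_hardy f) = 0" using z mem SH by blast
      thus "h2_inner (coeffs z) f = 0" using \<open>f \<in> S\<close> SH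
        by (auto simp: cinner_hardy_def Abs_hardy_inverse)
    qed simp
    hence "h2_inner g (coeffs z) = 0" using g unfolding h2_orth_def by blast
    thus "cinner (Abs_hardy g) z = 0"
      using g unfolding h2_orth_def by (simp add: cinner_hardy_def Abs_hardy_inverse)
  qed
  hence "Abs_hardy g \<in> S'"
    using orth_orth_subset closed_subspace_coeffs_preimage[OF S] unfolding S'_def by blast
  thus "g \<in> S" using mem g unfolding h2_orth_def by blast
qed
section \<open>Shift, backward shift and monomials\<close>

text \<open>\<open>shift\<close> is \<open>M\<^sub>z \<otimes> I\<close>, \<open>backshift\<close> its adjoint, and \<open>monom m x\<close> is \<open>z\<^sup>m \<otimes> x\<close>.\<close>

definition shift :: "(nat \<Rightarrow> 'e::complex_hilbert) \<Rightarrow> nat \<Rightarrow> 'e" where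
  "shift f = (\<lambda>n. if n = 0 then 0 else f (n - 1))"

definition backshift :: "(nat \<Rightarrow> 'e::complex_hilbert) \<Rightarrow> nat \<Rightarrow> 'e" where
  "backshift f = (\<lambda>n. f (Suc n))"

definition monom :: "nat \<Rightarrow> 'e::complex_hilbert \<Rightarrow> nat \<Rightarrow> 'e" where
  "monom m x = (\<lambda>n. if n = m then x else 0)"

definition h2_constants :: "(nat \<Rightarrow> 'e::complex_hilbert) set \<Rightarrow> 'e set" where
  "h2_constants S = {x. monom 0 x \<in> S}"

lemma summable_shift_real: "summable a \<Longrightarrow> summable (\<lambda>n. if n = 0 then 0 else a (n - 1) :: real)"
  by (subst summable_Suc_iff[symmetric]) simp

lemma shift_H2: "f \<in> H2 \<Longrightarrow> shift f \<in> H2"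
  unfolding H2_iff shift_def using summable_shift_real[of "\<lambda>n. (cnorm (f n))\<^sup>2"]
  by (simp add: if_distrib[of cnorm] if_distrib[of power2] cong: if_cong)

lemma backshift_H2: "f \<in> H2 \<Longrightarrow> backshift f \<in> H2"
  unfolding H2_iff backshift_def using summable_Suc_iff[of "\<lambda>n. (cnorm (f n))\<^sup>2"] by simp

lemma monom_H2: "monom m x \<in> H2"
  unfolding H2_iff monom_def by (simp add: if_distrib[of cnorm] if_distrib[of power2] cong: if_cong)

lemma h2_inner_monom_right: "h2_inner g (monom m x) = cinner (g m) x"
proof -
  have "(\<lambda>n. cinner (g n) (monom m x n)) = (\<lambda>n. if n = m then cinner (g m) x else 0)"
    unfolding monom_def by auto
  thus ?thesis
    unfolding h2_inner_def using sums_single[of m "\<lambda>_. cinner (g m) x"] by (simp add: sums_iff)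
qed

lemma h2_norm_monom0_diff: "h2_norm (\<lambda>n. monom 0 x n - monom 0 y n) = cnorm (x - y)"
proof -
  have "(\<lambda>n. (cnorm (monom 0 x n - monom 0 y n))\<^sup>2) = (\<lambda>n. if n = 0 then (cnorm (x - y))\<^sup>2 else 0)"
    unfolding monom_def by auto
  thus ?thesis
    unfolding h2_norm_def using sums_single[of 0 "\<lambda>_. (cnorm (x - y))\<^sup>2"]
    by (simp add: sums_iff cnorm_nonneg)
qed

lemma monom_Suc: "monom (Suc m) x = shift (monom m x)"
  unfolding monom_def shift_def by (rule ext) auto

lemma h2_inner_backshift:
  assumes "f \<in> H2" "g \<in> H2"
  shows "h2_inner (backshift f) g = h2_inner f (shift g)"
proof -
  have "summable (\<lambda>n. cinner (f n) (shift g n))"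
    using summable_cinner_H2[OF assms(1) shift_H2[OF assms(2)]] .
  thus ?thesis
    unfolding h2_inner_def using suminf_split_head by (fastforce simp: backshift_def shift_def)
qed

lemma h2_orth_H2_sub:
  assumes "0 \<in> E"
  shows "h2_orth (H2_sub E) = H2_sub (orth E)"
proof (intro equalityI subsetI)
  fix g assume g: "g \<in> h2_orth (H2_sub E)"
  have "cinner (g m) y = 0" if "y \<in> E" for m y
  proof -
    have "monom m y \<in> H2_sub E"
      using assms that monom_H2 unfolding H2_sub_def monom_def by auto
    thus ?thesis using g h2_inner_monom_right[of g m y] unfolding h2_orth_def by simp
  qed
  hence "g m \<in> orth E" for m
    unfolding orth_def by blast
  thus "g \<in> H2_sub (orth E)" using g unfolding h2_orth_def H2_sub_def by auto
next
  fix g assume "g \<in> H2_sub (orth E)"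
  thus "g \<in> h2_orth (H2_sub E)"
    unfolding h2_orth_def H2_sub_def orth_def h2_inner_def by auto
qed

text \<open>Invariance of \<open>\<S>\<^sup>\<perp>\<close> under the shift means invariance of \<open>\<S> = \<S>\<^sup>\<perp>\<^sup>\<perp>\<close> under its adjoint.\<close>
lemma backshift_invariant:
  assumes S: "h2_closed_subspace S" and orth_inv: "shift ` h2_orth S \<subseteq> h2_orth S"
    and f: "f \<in> S"
  shows "backshift f \<in> S"
proof (rule h2_orth_orth_subset[OF S, THEN subsetD])
  have fH: "f \<in> H2" using f h2_closed_subspace_subset[OF S] by blast
  have "h2_inner (backshift f) g = 0" if g: "g \<in> h2_orth S" for g
  proof -
    have gH: "g \<in> H2" using g unfolding h2_orth_def by blast
    have "h2_inner (shift g) f = 0" using orth_inv g f unfolding h2_orth_def by blast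
    thus ?thesis
      using h2_inner_commute[OF fH shift_H2[OF gH]] h2_inner_backshift[OF fH gH] by simp
  qed
  thus "backshift f \<in> h2_orth (h2_orth S)"
    unfolding h2_orth_def[of "h2_orth S"] using backshift_H2[OF fH] by blast
qed

lemma closed_subspace_h2_constants:
  assumes S: "h2_closed_subspace S"
  shows "closed_subspace (h2_constants S)"
  unfolding closed_subspace_def h2_constants_def
proof (intro conjI ballI allI impI CollectI)
  show "monom 0 0 \<in> S"
    using h2_closed_subspace_zero[OF S] unfolding monom_def by (simp add: if_distrib cong: if_cong)
  show "monom 0 (x + y) \<in> S" if "x \<in> {x. monom 0 x \<in> S}" "y \<in> {x. monom 0 x \<in> S}" for x y
  proof -
    have "monom 0 (x + y) = (\<lambda>n. monom 0 x n + monom 0 y n)" by (auto simp: monom_def)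
    thus ?thesis using h2_closed_subspace_add[OF S] that by simp
  qed
  show "monom 0 (a *\<^sub>C x) \<in> S" if "x \<in> {x. monom 0 x \<in> S}" for a x
  proof -
    have "monom 0 (a *\<^sub>C x) = (\<lambda>n. a *\<^sub>C monom 0 x n)" by (auto simp: monom_def)
    thus ?thesis using h2_closed_subspace_scaleC[OF S] that by simp
  qed
  show "monom 0 L \<in> S" if "(\<forall>n. X n \<in> {x. monom 0 x \<in> S}) \<and> (\<lambda>n. cnorm (X n - L)) \<longlonglongrightarrow> 0"
    for X L
  proof -
    have "(\<lambda>k. h2_norm (\<lambda>n. monom 0 (X k) n - monom 0 L n)) \<longlonglongrightarrow> 0"
      using that by (simp add: h2_norm_monom0_diff)
    moreover have "monom 0 (X k) \<in> S" for k using that by blast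
    ultimately show ?thesis
      using h2_closed_subspace_limit[OF S, of "\<lambda>k. monom 0 (X k)" "monom 0 L"] monom_H2 by blast
  qed
qed

lemma coeff_in_h2_constants:
  assumes S: "h2_closed_subspace S" and shift_inv: "shift ` S \<subseteq> S"
    and backshift_inv: "backshift ` S \<subseteq> S" and f: "f \<in> S"
  shows "f n \<in> h2_constants S"
  using f
proof (induction n arbitrary: f)
  case 0
  have "shift (backshift f) \<in> S" using 0 shift_inv backshift_inv by blast
  hence "(\<lambda>n. f n - shift (backshift f) n) \<in> S" by (rule h2_closed_subspace_diff[OF S 0])
  moreover have "monom 0 (f 0) = (\<lambda>n. f n - shift (backshift f) n)"
    unfolding monom_def shift_def backshift_def by (rule ext) simp
  ultimately show ?case unfolding h2_constants_def by simp
next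
  case (Suc n)
  have "backshift f \<in> S" using Suc.prems backshift_inv by blast
  from Suc.IH[OF this] show ?case by (simp add: backshift_def)
qed

lemma suminf_tail_tendsto_zero:
  fixes a :: "nat \<Rightarrow> real"
  assumes "summable a"
  shows "(\<lambda>N. \<Sum>n. if n < N then 0 else a n) \<longlonglongrightarrow> 0"
proof -
  have "(\<Sum>n. if n < N then 0 else a n) = suminf a - (\<Sum>n<N. a n)" for N
  proof -
    define c where "c = (\<lambda>n. if n < N then 0 else a n)"
    have "summable (\<lambda>n. c (n + N))" unfolding c_def using assms by simp
    hence "suminf c = (\<Sum>n. c (n + N)) + (\<Sum>n<N. c n)"
      by (intro suminf_split_initial_segment) simp
    also have "\<dots> = (\<Sum>n. a (n + N))" unfolding c_def by simp
    also have "\<dots> = suminf a - (\<Sum>n<N. a n)" by (rule suminf_minus_initial_segment[OF assms])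
    finally show ?thesis unfolding c_def .
  qed
  thus ?thesis
    using tendsto_diff[OF tendsto_const summable_LIMSEQ[OF assms], of "suminf a"] by simp
qed

text \<open>Truncations of \<open>g\<close> lie in \<open>\<S>\<close> and converge to \<open>g\<close>.\<close>
lemma H2_sub_subset_if_monoms:
  assumes S: "h2_closed_subspace S" and monoms: "\<And>m x. x \<in> E \<Longrightarrow> monom m x \<in> S"
  shows "H2_sub E \<subseteq> S"
proof
  fix g assume "g \<in> H2_sub E"
  hence gH: "g \<in> H2" and gE: "\<And>n. g n \<in> E" unfolding H2_sub_def by auto
  define p where "p = (\<lambda>N n. if n < N then g n else 0)"
  have "p N \<in> S" for N
  proof (induction N)
    case 0 thus ?case using h2_closed_subspace_zero[OF S] unfolding p_def by simp
  next
    case (Suc N)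
    have "p (Suc N) = (\<lambda>n. p N n + monom N (g N) n)"
      unfolding p_def monom_def by (rule ext) simp
    thus ?case using h2_closed_subspace_add[OF S Suc.IH monoms[OF gE]] by simp
  qed
  moreover have "(\<lambda>N. h2_norm (\<lambda>n. p N n - g n)) \<longlonglongrightarrow> 0"
  proof -
    have "(\<lambda>n. (cnorm (p N n - g n))\<^sup>2) = (\<lambda>n. if n < N then 0 else (cnorm (g n))\<^sup>2)" for N
      unfolding p_def by (rule ext) (simp add: cnorm_minus)
    hence "h2_norm (\<lambda>n. p N n - g n) = sqrt (\<Sum>n. if n < N then 0 else (cnorm (g n))\<^sup>2)" for N
      unfolding h2_norm_def by simp
    thus ?thesis
      using tendsto_real_sqrt[OF suminf_tail_tendsto_zero] gH unfolding H2_iff by fastforce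
  qed
  ultimately show "g \<in> S"
    using h2_closed_subspace_limit[OF S _ gH] by blast
qed

lemma shift_backshift_invariant_eq_H2_sub:
  assumes S: "h2_closed_subspace S" and shift_inv: "shift ` S \<subseteq> S"
    and backshift_inv: "backshift ` S \<subseteq> S"
  shows "S = H2_sub (h2_constants S)"
proof
  show "S \<subseteq> H2_sub (h2_constants S)"
    using h2_closed_subspace_subset[OF S] coeff_in_h2_constants[OF assms] unfolding H2_sub_def by blast
  have "monom m x \<in> S" if "x \<in> h2_constants S" for m x
    using that shift_inv by (induction m) (auto simp: h2_constants_def monom_Suc)
  thus "H2_sub (h2_constants S) \<subseteq> S" by (rule H2_sub_subset_if_monoms[OF S])
qed

lemma clinear_add: "clinear T \<Longrightarrow> T (x + y) = T x + T y"
  unfolding clinear_def by blast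

lemma clinear_zero: "clinear T \<Longrightarrow> T 0 = 0"
  using clinear_add[of T 0 0] by simp

lemma clinear_diff: "clinear T \<Longrightarrow> T (x - y) = T x - T y"
  using clinear_add[of T "x - y" y] by (simp add: eq_diff_eq)

lemma unitary_clinear: "unitary U \<Longrightarrow> clinear U"
  unfolding unitary_def by blast

lemma unitary_cinner: "unitary U \<Longrightarrow> cinner (U x) (U y) = cinner x y"
  unfolding unitary_def by blast

lemma unitary_inj:
  assumes U: "unitary U"
  shows "inj U"
proof (rule injI)
  fix x y assume "U x = U y"
  hence "U (x - y) = 0" using clinear_diff[OF unitary_clinear[OF U]] by simp
  hence "cinner (x - y) (x - y) = 0" using unitary_cinner[OF U, of "x - y" "x - y"] by simp
  thus "x = y" by simp
qed

lemma unitary_inv_left [simp]: "unitary U \<Longrightarrow> inv U (U x) = x"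
  by (simp add: unitary_inj)

lemma unitary_inv_right [simp]: "unitary U \<Longrightarrow> U (inv U x) = x"
  unfolding unitary_def by (simp add: surj_f_inv_f)

lemma unitary_inv_zero: "unitary U \<Longrightarrow> inv U 0 = 0"
  using unitary_inv_left[of U 0] clinear_zero[OF unitary_clinear] by metis

lemma cinner_unitary_inv: "unitary U \<Longrightarrow> cinner (inv U x) y = cinner x (U y)"
  using unitary_cinner[of U "inv U x" y] by simp

lemma cnorm_unitary: "unitary U \<Longrightarrow> cnorm (U x) = cnorm x"
  unfolding cnorm_def by (simp add: unitary_cinner)

lemma cnorm_unitary_inv: "unitary U \<Longrightarrow> cnorm (inv U x) = cnorm x"
  using cnorm_unitary[of U "inv U x"] by simp

text \<open>A unitary reducing \<open>E\<close> maps \<open>E\<^sup>\<perp>\<close> into itself, so its adjoint \<open>U\<^sup>* = U\<^sup>-\<^sup>1\<close> maps \<open>E = E\<^sup>\<perp>\<^sup>\<perp>\<close> into itself.\<close>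
lemma unitary_inv_reducing:
  assumes U: "unitary U" and E: "closed_subspace E" and red: "reducing E U"
  shows "inv U ` E \<subseteq> E" and "inv U ` orth E \<subseteq> orth E"
proof -
  have UE: "U y \<in> E" if "y \<in> E" for y
    using that red unfolding reducing_def by blast
  have UO: "U z \<in> orth E" if "z \<in> orth E" for z
    using that red unfolding reducing_def by blast
  have "cinner (inv U x) y = 0" if "x \<in> orth E" "y \<in> E" for x y
    using that UE unfolding orth_def cinner_unitary_inv[OF U] by blast
  thus "inv U ` orth E \<subseteq> orth E" unfolding orth_def by blast
  have "cinner (inv U x) z = 0" if x: "x \<in> E" and z: "z \<in> orth E" for x z
  proof -
    have "cinner (U z) x = 0" using UO[OF z] x unfolding orth_def by blast
    thus ?thesis unfolding cinner_unitary_inv[OF U] using cinner_eq_zero_commute by blast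
  qed
  hence "inv U ` E \<subseteq> orth (orth E)" unfolding orth_def by blast
  thus "inv U ` E \<subseteq> E" using orth_orth_subset[OF E] by blast
qed

lemma projection_clinear: "projection P \<Longrightarrow> clinear P"
  unfolding projection_def by blast

lemma projection_idem: "projection P \<Longrightarrow> P (P x) = P x"
  unfolding projection_def by blast

lemma projection_pythagoras:
  assumes P: "projection P"
  shows "(cnorm x)\<^sup>2 = (cnorm (P x))\<^sup>2 + (cnorm (x - P x))\<^sup>2"
proof -
  have "cinner (P x) (x - P x) = 0"
    using P unfolding projection_def by (metis cinner_diff_right diff_self)
  thus ?thesis using cnorm_sq_add[of "P x" "x - P x"] by simp
qed

lemma BCL_V1_BCL_V2:
  assumes U: "unitary U" and P: "projection P"
  shows "BCL_V1 U P (BCL_V2 U P f) = shift f"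
proof
  fix n
  have PL: "clinear P" using P by (rule projection_clinear)
  define g where "g = (\<lambda>n. (if n = 0 then 0 else P (f (n - 1))) + (f n - P (f n)))"
  have inv_V2: "inv U (BCL_V2 U P f n) = g n" for n
    unfolding BCL_V2_def g_def using U by simp
  have Pg: "P (g n) = (if n = 0 then 0 else P (f (n - 1)))" for n
    unfolding g_def using clinear_add[OF PL] clinear_diff[OF PL] clinear_zero[OF PL] projection_idem[OF P]
    by simp
  show "BCL_V1 U P (BCL_V2 U P f) n = shift f n"
    unfolding BCL_V1_def inv_V2 shift_def Pg by (cases n) (simp_all add: g_def Pg)
qed

lemma BCL_V1_H2:
  assumes U: "unitary U" and P: "projection P" and f: "f \<in> H2"
  shows "BCL_V1 U P f \<in> H2"
proof -
  have "summable (\<lambda>n. 2 * (cnorm (f n))\<^sup>2 + 2 * (cnorm (shift f n))\<^sup>2)"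
    using f shift_H2[OF f] unfolding H2_iff by (intro summable_add summable_mult)
  thus ?thesis unfolding H2_iff
  proof (rule summable_comparison_test'[where N=0])
    fix n
    have "(cnorm (BCL_V1 U P f n))\<^sup>2 \<le> 2 * (cnorm (P (inv U (f n))))\<^sup>2
      + 2 * (cnorm (inv U (shift f n) - P (inv U (shift f n))))\<^sup>2"
      unfolding BCL_V1_def shift_def using cnorm_sq_add_le unitary_inv_zero[OF U]
        clinear_zero[OF projection_clinear[OF P]] by (cases n) auto
    also have "\<dots> \<le> 2 * (cnorm (f n))\<^sup>2 + 2 * (cnorm (shift f n))\<^sup>2"
      using projection_pythagoras[OF P, of "inv U (f n)"]
        projection_pythagoras[OF P, of "inv U (shift f n)"] cnorm_unitary_inv[OF U] by simp
    finally show "norm ((cnorm (BCL_V1 U P f n))\<^sup>2) \<le> 2 * (cnorm (f n))\<^sup>2 + 2 * (cnorm (shift f n))\<^sup>2"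
      by simp
  qed
qed

lemma BCL_V2_H2:
  assumes U: "unitary U" and P: "projection P" and f: "f \<in> H2"
  shows "BCL_V2 U P f \<in> H2"
proof -
  have "summable (\<lambda>n. 2 * (cnorm (shift f n))\<^sup>2 + 2 * (cnorm (f n))\<^sup>2)"
    using f shift_H2[OF f] unfolding H2_iff by (intro summable_add summable_mult)
  thus ?thesis unfolding H2_iff
  proof (rule summable_comparison_test'[where N=0])
    fix n
    have "(cnorm (BCL_V2 U P f n))\<^sup>2 \<le> 2 * (cnorm (P (shift f n)))\<^sup>2 + 2 * (cnorm (f n - P (f n)))\<^sup>2"
      unfolding BCL_V2_def shift_def cnorm_unitary[OF U] using cnorm_sq_add_le
        clinear_zero[OF projection_clinear[OF P]] by (cases n) auto
    also have "\<dots> \<le> 2 * (cnorm (shift f n))\<^sup>2 + 2 * (cnorm (f n))\<^sup>2"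
      using projection_pythagoras[OF P, of "f n"] projection_pythagoras[OF P, of "shift f n"] by simp
    finally show "norm ((cnorm (BCL_V2 U P f n))\<^sup>2) \<le> 2 * (cnorm (shift f n))\<^sup>2 + 2 * (cnorm (f n))\<^sup>2"
      by simp
  qed
qed

lemma BCL_V1_H2_sub:
  assumes U: "unitary U" and P: "projection P" and M: "closed_subspace M"
    and PM: "P ` M \<subseteq> M" and UM: "inv U ` M \<subseteq> M" and f: "f \<in> H2_sub M"
  shows "BCL_V1 U P f \<in> H2_sub M"
proof -
  have "BCL_V1 U P f n \<in> M" for n
    using f PM UM closed_subspace_zero[OF M] closed_subspace_add[OF M] closed_subspace_diff[OF M]
    unfolding BCL_V1_def H2_sub_def by (simp add: image_subset_iff)
  thus ?thesis using BCL_V1_H2[OF U P] f unfolding H2_sub_def by auto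
qed

lemma BCL_V2_H2_sub:
  assumes U: "unitary U" and P: "projection P" and M: "closed_subspace M"
    and PM: "P ` M \<subseteq> M" and UM: "U ` M \<subseteq> M" and f: "f \<in> H2_sub M"
  shows "BCL_V2 U P f \<in> H2_sub M"
proof -
  have "BCL_V2 U P f n \<in> M" for n
    using f PM UM closed_subspace_zero[OF M] closed_subspace_add[OF M] closed_subspace_diff[OF M]
    unfolding BCL_V2_def H2_sub_def by (simp add: image_subset_iff)
  thus ?thesis using BCL_V2_H2[OF U P] f unfolding H2_sub_def by auto
qed

text \<open>Applied to a constant \<open>x\<close>, \<open>V\<^sub>2\<close> produces the coefficients \<open>U P\<^sup>\<perp> x\<close> and \<open>U P x\<close>, while \<open>V\<^sub>1\<close>
  produces the constant coefficient \<open>P U\<^sup>* x\<close>; so invariance of \<open>H\<^sup>2_M\<close> is inherited by \<open>M\<close>.\<close>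
lemma BCL_invariant_H2_sub_imp_invariant:
  assumes U: "unitary U" and P: "projection P" and M: "closed_subspace M"
    and V1: "BCL_V1 U P ` H2_sub M \<subseteq> H2_sub M" and V2: "BCL_V2 U P ` H2_sub M \<subseteq> H2_sub M"
  shows "U ` M \<subseteq> M" and "P ` M \<subseteq> M"
proof -
  have P0: "P 0 = 0" by (rule clinear_zero[OF projection_clinear[OF P]])
  have monom0: "monom 0 x \<in> H2_sub M" if "x \<in> M" for x
    using that closed_subspace_zero[OF M] monom_H2 unfolding H2_sub_def monom_def by auto
  have coeff: "g n \<in> M" if "g \<in> H2_sub M" for g n
    using that unfolding H2_sub_def by blast
  have UM: "U x \<in> M" if x: "x \<in> M" for x
  proof -
    have "BCL_V2 U P (monom 0 x) \<in> H2_sub M" using V2 monom0[OF x] by blast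
    moreover have "BCL_V2 U P (monom 0 x) 0 = U (x - P x)" "BCL_V2 U P (monom 0 x) 1 = U (P x)"
      unfolding BCL_V2_def monom_def by (simp_all add: P0)
    ultimately have "U (x - P x) \<in> M" "U (P x) \<in> M" using coeff by metis+
    hence "U (x - P x) + U (P x) \<in> M" by (rule closed_subspace_add[OF M])
    thus ?thesis using clinear_add[OF unitary_clinear[OF U], of "x - P x" "P x"] by simp
  qed
  thus "U ` M \<subseteq> M" by blast
  have "P x \<in> M" if x: "x \<in> M" for x
  proof -
    have "BCL_V1 U P (monom 0 (U x)) \<in> H2_sub M" using V1 monom0[OF UM[OF x]] by blast
    moreover have "BCL_V1 U P (monom 0 (U x)) 0 = P x"
      unfolding BCL_V1_def monom_def using U by simp
    ultimately show ?thesis using coeff by metis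
  qed
  thus "P ` M \<subseteq> M" by blast
qed

section \<open>Reducing subspaces of the BCL pair\<close>

lemma BCL_reducing_imp_H2_sub:
  assumes U: "unitary U" and P: "projection P" and S: "h2_closed_subspace S"
    and V1: "h2_reducing S (BCL_V1 U P)" and V2: "h2_reducing S (BCL_V2 U P)"
  shows "closed_subspace (h2_constants S) \<and> reducing (h2_constants S) U
    \<and> reducing (h2_constants S) P \<and> S = H2_sub (h2_constants S)"
proof -
  have V1S: "BCL_V1 U P ` S \<subseteq> S" and V1O: "BCL_V1 U P ` h2_orth S \<subseteq> h2_orth S"
    and V2S: "BCL_V2 U P ` S \<subseteq> S" and V2O: "BCL_V2 U P ` h2_orth S \<subseteq> h2_orth S"
    using V1 V2 unfolding h2_reducing_def by blast+
  define E where "E = h2_constants S"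
  have shift_eq: "shift f = BCL_V1 U P (BCL_V2 U P f)" for f
    using BCL_V1_BCL_V2[OF U P] by simp
  have "shift ` S \<subseteq> S" "shift ` h2_orth S \<subseteq> h2_orth S"
    using V1S V1O V2S V2O by (auto simp: shift_eq image_subset_iff)
  moreover from this(2) have "backshift ` S \<subseteq> S"
    using backshift_invariant[OF S] by blast
  ultimately have SE: "S = H2_sub E"
    unfolding E_def using shift_backshift_invariant_eq_H2_sub[OF S] by blast
  have E: "closed_subspace E"
    unfolding E_def by (rule closed_subspace_h2_constants[OF S])
  have orth_SE: "h2_orth S = H2_sub (orth E)"
    unfolding SE by (rule h2_orth_H2_sub[OF closed_subspace_zero[OF E]])
  have "U ` E \<subseteq> E" "P ` E \<subseteq> E"
    using BCL_invariant_H2_sub_imp_invariant[OF U P E] V1S V2S unfolding SE by blast+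
  moreover have "U ` orth E \<subseteq> orth E" "P ` orth E \<subseteq> orth E"
    using BCL_invariant_H2_sub_imp_invariant[OF U P closed_subspace_orth] V1O V2O
    unfolding orth_SE by blast+
  ultimately show ?thesis
    using E SE unfolding reducing_def E_def[symmetric] by blast
qed

lemma H2_sub_BCL_reducing:
  assumes U: "unitary U" and P: "projection P" and E: "closed_subspace E"
    and rU: "reducing E U" and rP: "reducing E P"
  shows "h2_reducing (H2_sub E) (BCL_V1 U P) \<and> h2_reducing (H2_sub E) (BCL_V2 U P)"
proof -
  have orth_E: "h2_orth (H2_sub E) = H2_sub (orth E)"
    by (rule h2_orth_H2_sub[OF closed_subspace_zero[OF E]])
  have UE: "U ` E \<subseteq> E" "U ` orth E \<subseteq> orth E" and PE: "P ` E \<subseteq> E" "P ` orth E \<subseteq> orth E"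
    using rU rP unfolding reducing_def by blast+
  note O = closed_subspace_orth[of E]
  note inv = unitary_inv_reducing[OF U E rU]
  have "BCL_V1 U P ` H2_sub E \<subseteq> H2_sub E" "BCL_V1 U P ` H2_sub (orth E) \<subseteq> H2_sub (orth E)"
    using BCL_V1_H2_sub[OF U P E PE(1) inv(1)] BCL_V1_H2_sub[OF U P O PE(2) inv(2)] by blast+
  moreover have "BCL_V2 U P ` H2_sub E \<subseteq> H2_sub E" "BCL_V2 U P ` H2_sub (orth E) \<subseteq> H2_sub (orth E)"
    using BCL_V2_H2_sub[OF U P E PE(1) UE(1)] BCL_V2_H2_sub[OF U P O PE(2) UE(2)] by blast+
  ultimately show ?thesis
    unfolding h2_reducing_def orth_E by blast
qed

theorem lemma2p1:
  fixes U P :: "'e::complex_hilbert \<Rightarrow> 'e" and S :: "(nat \<Rightarrow> 'e) set"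
  assumes "separable_space TYPE('e)"
    and "unitary U" and "projection P"
    and "h2_closed_subspace S"
  shows "(h2_reducing S (BCL_V1 U P) \<and> h2_reducing S (BCL_V2 U P)) \<longleftrightarrow>
    (\<exists>E'. closed_subspace E' \<and> reducing E' U \<and> reducing E' P \<and> S = H2_sub E')"
proof
  assume "h2_reducing S (BCL_V1 U P) \<and> h2_reducing S (BCL_V2 U P)"
  thus "\<exists>E'. closed_subspace E' \<and> reducing E' U \<and> reducing E' P \<and> S = H2_sub E'"
    using BCL_reducing_imp_H2_sub[OF assms(2-4)] by blast
next
  assume "\<exists>E'. closed_subspace E' \<and> reducing E' U \<and> reducing E' P \<and> S = H2_sub E'"
  thus "h2_reducing S (BCL_V1 U P) \<and> h2_reducing S (BCL_V2 U P)"
    using H2_sub_BCL_reducing[OF assms(2,3)] by blast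
qed

end
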